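(* Let $\hat{\mathcal D}$ be a marked DAG over $X$, $\kappa>0$, $q\in\mathcal Q_{\mathcal D}$, $c\in\mathbb R_+^X$, $p=\mathcal A(q,c)$ and $P=\Lambda(p)$. Then for every unit flow $F\in\mathcal F_{\mathcal D}$, $$\mathbb D(F\,\|\,p)-\mathbb D(F\,\|\,q)\le\sum_{x\in X}c_x(F_x-P_x).$$
   Context: Let $X$ be a finite set. A DAG over $X$ is a finite directed acyclic graph $\mathcal D=(V,A)$ with $X\subseteq V$, a single source $r$, whose set of sinks is exactly $X$. A flow is $F\in\mathbb R_+^A$ with $\sum_{v:uv\in A}F_{uv}=\sum_{v:vu\in A}F_{vu}$ for $u\in V\setminus(X\cup\{r\})$; $F_u:=\sum_{v:uv\in A}F_{uv}$ for $u\notin X$, $F_x:=\sum_{u:ux\in A}F_{ux}$ for $x\in X$; unit flows have $F_r=1$ and form $\mathcal F_{\mathcal D}$. A marked DAG is $(\mathcal D,\omega,\theta)$ with $\omega\in\mathbb R_{>0}^A$, $\omega_{uv}>\omega_{vw}$ whenever $uv,vw\in A$, and $\theta\in\mathbb R_{>0}^A$ with $\sum_{v:uv\in A}\theta_{uv}=1$ for $u\in V\setminus X$. Put $\eta_{uv}:=1+\log(1/\theta_{uv})$, $\delta_{uv}:=\theta_{uv}/\eta_{uv}$. $\mathcal Q_{\mathcal D}:=\{p\in\mathbb R_+^A:\sum_{v:uv\in A}p_{uv}=1\ \forall u\in V\setminus X\}$; $q^{(u)}:=(q_{uv})_{v:uv\in A}$; $\mathcal Q^{(u)}$ is the probability simplex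 on $\{v:uv\in A\}$; $\mathbb D^{(u)}(p\|p'):=\frac1\kappa\sum_{v:uv\in A}\frac{\omega_{uv}}{\eta_{uv}}\big[(p_v+\delta_{uv})\log\frac{p_v+\delta_{uv}}{p'_v+\delta_{uv}}+p'_v-p_v\big]$. The step map $\mathcal A(q,c)$ outputs $p\in\mathcal Q_{\mathcal D}$: set $\hat c_x:=c_x$ for $x\in X$; process $u\in V\setminus X$ so that each vertex comes after all its out-neighbours, setting $p^{(u)}:=\arg\min_{p'\in\mathcal Q^{(u)}}\{\mathbb D^{(u)}(p'\|q^{(u)})+\sum_vp'_v\hat c_v\}$ and $\hat c_u:=\sum_vp^{(u)}_v\hat c_v$. $\Lambda(q)$ is the unique unit flow $F$ with $F_{uv}=F_uq_{uv}$ for all $uv\in A$. Global divergence: for $F\in\mathcal F_{\mathcal D}$, $q\in\mathcal Q_{\mathcal D}$, $\mathbb D(F\|q):=\frac1\kappa\sum_{uv\in A}\frac{\omega_{uv}}{\eta_{uv}}\big[(F_{uv}+F_u\delta_{uv})\log\frac{F_{uv}/F_u+\delta_{uv}}{q_{uv}+\delta_{uv}}+F_uq_{uv}-F_{uv}\big]$, with terms having $F_u=0$ interpreted as $0$. *)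

theory Defs
  imports Complex_Main
begin

definition dag :: "'v set \<Rightarrow> ('v \<times> 'v) set \<Rightarrow> 'v set \<Rightarrow> 'v \<Rightarrow> bool" where
  "dag V A X r \<longleftrightarrow> finite V \<and> A \<subseteq> V \<times> V \<and> acyclic A \<and> X \<subseteq> V \<and> r \<in> V \<and>
     {v \<in> V. \<forall>u. (u, v) \<notin> A} = {r} \<and>
     {u \<in> V. \<forall>v. (u, v) \<notin> A} = X"

definition outsum :: "('v \<times> 'v) set \<Rightarrow> ('v \<times> 'v \<Rightarrow> real) \<Rightarrow> 'v \<Rightarrow> real" where
  "outsum A F u = (\<Sum>v\<in>{v. (u, v) \<in> A}. F (u, v))"

definition insum :: "('v \<times> 'v) set \<Rightarrow> ('v \<times> 'v \<Rightarrow> real) \<Rightarrow> 'v \<Rightarrow> real" where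
  "insum A F u = (\<Sum>v\<in>{v. (v, u) \<in> A}. F (v, u))"

definition flow_val :: "('v \<times> 'v) set \<Rightarrow> 'v set \<Rightarrow> ('v \<times> 'v \<Rightarrow> real) \<Rightarrow> 'v \<Rightarrow> real" where
  "flow_val A X F u = (if u \<in> X then insum A F u else outsum A F u)"

definition is_flow :: "'v set \<Rightarrow> ('v \<times> 'v) set \<Rightarrow> 'v set \<Rightarrow> 'v \<Rightarrow> ('v \<times> 'v \<Rightarrow> real) \<Rightarrow> bool" where
  "is_flow V A X r F \<longleftrightarrow> (\<forall>e\<in>A. 0 \<le> F e) \<and>
     (\<forall>u \<in> V - (X \<union> {r}). outsum A F u = insum A F u)"

definition unit_flow :: "'v set \<Rightarrow> ('v \<times> 'v) set \<Rightarrow> 'v set \<Rightarrow> 'v \<Rightarrow> ('v \<times> 'v \<Rightarrow> real) \<Rightarrow> bool" where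
  "unit_flow V A X r F \<longleftrightarrow> is_flow V A X r F \<and> flow_val A X F r = 1"

definition marked :: "'v set \<Rightarrow> ('v \<times> 'v) set \<Rightarrow> 'v set \<Rightarrow> ('v \<times> 'v \<Rightarrow> real) \<Rightarrow> ('v \<times> 'v \<Rightarrow> real) \<Rightarrow> bool" where
  "marked V A X \<omega> \<theta> \<longleftrightarrow> (\<forall>e\<in>A. 0 < \<omega> e) \<and>
     (\<forall>u v w. (u, v) \<in> A \<longrightarrow> (v, w) \<in> A \<longrightarrow> \<omega> (u, v) > \<omega> (v, w)) \<and>
     (\<forall>e\<in>A. 0 < \<theta> e) \<and> (\<forall>u \<in> V - X. outsum A \<theta> u = 1)"

definition eta :: "('v \<times> 'v \<Rightarrow> real) \<Rightarrow> 'v \<times> 'v \<Rightarrow> real" where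
  "eta \<theta> e = 1 + ln (1 / \<theta> e)"

definition dlt :: "('v \<times> 'v \<Rightarrow> real) \<Rightarrow> 'v \<times> 'v \<Rightarrow> real" where
  "dlt \<theta> e = \<theta> e / eta \<theta> e"

definition in_Q :: "'v set \<Rightarrow> ('v \<times> 'v) set \<Rightarrow> 'v set \<Rightarrow> ('v \<times> 'v \<Rightarrow> real) \<Rightarrow> bool" where
  "in_Q V A X p \<longleftrightarrow> (\<forall>e\<in>A. 0 \<le> p e) \<and> (\<forall>u \<in> V - X. outsum A p u = 1)"

text \<open>The simplex Q^(u) on the out-neighbours of u (values off the out-neighbours are irrelevant).\<close>
definition simplex_at :: "('v \<times> 'v) set \<Rightarrow> 'v \<Rightarrow> ('v \<Rightarrow> real) set" where
  "simplex_at A u = {p'. (\<forall>v. (u, v) \<in> A \<longrightarrow> 0 \<le> p' v) \<and> (\<Sum>v\<in>{v. (u, v) \<in> A}. p' v) = 1}"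

definition local_div :: "('v \<times> 'v) set \<Rightarrow> ('v \<times> 'v \<Rightarrow> real) \<Rightarrow> ('v \<times> 'v \<Rightarrow> real) \<Rightarrow> real
     \<Rightarrow> 'v \<Rightarrow> ('v \<Rightarrow> real) \<Rightarrow> ('v \<Rightarrow> real) \<Rightarrow> real" where
  "local_div A \<omega> \<theta> \<kappa> u p p' = (1 / \<kappa>) * (\<Sum>v\<in>{v. (u, v) \<in> A}.
     \<omega> (u, v) / eta \<theta> (u, v) *
       ((p v + dlt \<theta> (u, v)) * ln ((p v + dlt \<theta> (u, v)) / (p' v + dlt \<theta> (u, v))) + p' v - p v))"

text \<open>p is the output of the step map A(q,c): there are values c-hat, equal to c on X,
  such that at every non-sink u, p^(u) is the minimiser over Q^(u) of
  D^(u)(. || q^(u)) + <., c-hat>, and c-hat_u = sum_v p_uv c-hat_v.\<close>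
definition step_output :: "'v set \<Rightarrow> ('v \<times> 'v) set \<Rightarrow> 'v set \<Rightarrow> ('v \<times> 'v \<Rightarrow> real) \<Rightarrow> ('v \<times> 'v \<Rightarrow> real)
     \<Rightarrow> real \<Rightarrow> ('v \<times> 'v \<Rightarrow> real) \<Rightarrow> ('v \<Rightarrow> real) \<Rightarrow> ('v \<times> 'v \<Rightarrow> real) \<Rightarrow> bool" where
  "step_output V A X \<omega> \<theta> \<kappa> q c p \<longleftrightarrow> in_Q V A X p \<and>
     (\<exists>ch :: 'v \<Rightarrow> real. (\<forall>x\<in>X. ch x = c x) \<and>
        (\<forall>u \<in> V - X.
           (\<lambda>v. p (u, v)) \<in> simplex_at A u \<and>
           (\<forall>p' \<in> simplex_at A u.
              local_div A \<omega> \<theta> \<kappa> u (\<lambda>v. p (u, v)) (\<lambda>v. q (u, v))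
                + (\<Sum>v\<in>{v. (u, v) \<in> A}. p (u, v) * ch v)
              \<le> local_div A \<omega> \<theta> \<kappa> u p' (\<lambda>v. q (u, v))
                + (\<Sum>v\<in>{v. (u, v) \<in> A}. p' v * ch v)) \<and>
           ch u = (\<Sum>v\<in>{v. (u, v) \<in> A}. p (u, v) * ch v)))"

definition is_Lambda :: "'v set \<Rightarrow> ('v \<times> 'v) set \<Rightarrow> 'v set \<Rightarrow> 'v \<Rightarrow> ('v \<times> 'v \<Rightarrow> real)
     \<Rightarrow> ('v \<times> 'v \<Rightarrow> real) \<Rightarrow> bool" where
  "is_Lambda V A X r p P \<longleftrightarrow> unit_flow V A X r P \<and>
     (\<forall>u v. (u, v) \<in> A \<longrightarrow> P (u, v) = flow_val A X P u * p (u, v))"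

definition glob_div :: "('v \<times> 'v) set \<Rightarrow> 'v set \<Rightarrow> ('v \<times> 'v \<Rightarrow> real) \<Rightarrow> ('v \<times> 'v \<Rightarrow> real) \<Rightarrow> real
     \<Rightarrow> ('v \<times> 'v \<Rightarrow> real) \<Rightarrow> ('v \<times> 'v \<Rightarrow> real) \<Rightarrow> real" where
  "glob_div A X \<omega> \<theta> \<kappa> F q = (1 / \<kappa>) * (\<Sum>e\<in>A.
     (let Fu = flow_val A X F (fst e) in
      if Fu = 0 then 0 else
        \<omega> e / eta \<theta> e *
          ((F e + Fu * dlt \<theta> e) * ln ((F e / Fu + dlt \<theta> e) / (q e + dlt \<theta> e))
           + Fu * q e - F e)))"

end

theory Submission
  imports Defs
begin

text \<open>The global divergence splits over the non-sink vertices u as the sum of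
  F_u D^(u)(F(u,.)/F_u || .). At each u, first-order optimality of p^(u) along the segment towards
  any point f of the simplex, combined with the three-point identity for the divergence and its
  nonnegativity, yields D^(u)(f || p) - D^(u)(f || q) <= <f, c-hat> - c-hat_u. Weighting by F_u and
  summing telescopes along the flow F to sum_x c_x F_x - c-hat_r, and the same telescoping for
  P = Lambda(p), where every vertex term vanishes, shows c-hat_r = sum_x c_x P_x.\<close>

definition shifted_kl ::
    "'a set \<Rightarrow> ('a \<Rightarrow> real) \<Rightarrow> ('a \<Rightarrow> real) \<Rightarrow> ('a \<Rightarrow> real) \<Rightarrow> ('a \<Rightarrow> real) \<Rightarrow> real" where
  "shifted_kl S W D x y =
     (\<Sum>v\<in>S. W v * ((x v + D v) * ln ((x v + D v) / (y v + D v)) + y v - x v))"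

lemma kl_term_nonneg:
  fixes a b :: real
  assumes "0 < a" "0 < b"
  shows "0 \<le> a * ln (a / b) + b - a"
proof -
  have "ln (b / a) \<le> b / a - 1"
    using assms by (intro ln_le_minus_one) simp
  then have "a * (1 - b / a) \<le> a * ln (a / b)"
    using assms by (intro mult_left_mono) (simp_all add: ln_div)
  moreover have "a * (1 - b / a) = a - b"
    using assms by (simp add: field_simps)
  ultimately show ?thesis
    by linarith
qed

lemma shifted_kl_nonneg:
  assumes "\<forall>v\<in>S. 0 \<le> W v" "\<forall>v\<in>S. 0 < x v + D v" "\<forall>v\<in>S. 0 < y v + D v"
  shows "0 \<le> shifted_kl S W D x y"
  unfolding shifted_kl_def
proof (intro sum_nonneg mult_nonneg_nonneg)
  fix v assume "v \<in> S"
  then show "0 \<le> W v" and "0 \<le> (x v + D v) * ln ((x v + D v) / (y v + D v)) + y v - x v"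
    using assms kl_term_nonneg[of "x v + D v" "y v + D v"] by simp_all
qed

lemma shifted_kl_three_point:
  assumes "\<forall>v\<in>S. 0 < x v + D v" "\<forall>v\<in>S. 0 < p v + D v" "\<forall>v\<in>S. 0 < q v + D v"
  shows "shifted_kl S W D x p - shifted_kl S W D x q
         = - (\<Sum>v\<in>S. (x v - p v) * (W v * ln ((p v + D v) / (q v + D v))))
           - shifted_kl S W D p q"
proof -
  have "W v * ((x v + D v) * ln ((x v + D v) / (p v + D v)) + p v - x v)
        - W v * ((x v + D v) * ln ((x v + D v) / (q v + D v)) + q v - x v)
        = - ((x v - p v) * (W v * ln ((p v + D v) / (q v + D v))))
          - W v * ((p v + D v) * ln ((p v + D v) / (q v + D v)) + q v - p v)"
    if v: "v \<in> S" for v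
  proof -
    have log_split: "ln ((x v + D v) / (q v + D v))
        = ln ((x v + D v) / (p v + D v)) + ln ((p v + D v) / (q v + D v))"
      using assms v by (auto simp: ln_div)
    show ?thesis
      unfolding log_split by (simp add: algebra_simps)
  qed
  then show ?thesis
    unfolding shifted_kl_def
    by (simp add: sum_subtractf[symmetric] sum_negf[symmetric] flip: sum_subtractf)
qed

lemma kl_term_line_deriv:
  fixes p q b w d :: real
  assumes "0 < p + d" "0 < q + d"
  shows "((\<lambda>t. w * ((p + t * b + d) * ln ((p + t * b + d) / (q + d)) + q - (p + t * b)))
          has_real_derivative b * (w * ln ((p + d) / (q + d)))) (at 0)"
proof (rule DERIV_cong)
  \<comment> \<open>The derivative in the unsimplified shape in which derivative_eq_intros produces it.\<close>
  show "((\<lambda>t. w * ((p + t * b + d) * ln ((p + t * b + d) / (q + d)) + q - (p + t * b)))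
        has_real_derivative
          w * ((0 * b + 1 * b + 0) * ln ((p + 0 * b + d) / (q + d))
            + (p + 0 * b + d) * ((0 * b + 1 * b + 0) / (q + d) / ((p + 0 * b + d) / (q + d)))
            + 0 - (0 + (0 * b + 1 * b)))) (at 0)"
    using assms by (auto intro!: derivative_eq_intros)
  have "(p + d) * (b / (q + d) / ((p + d) / (q + d))) = b"
    using assms by simp
  then show "w * ((0 * b + 1 * b + 0) * ln ((p + 0 * b + d) / (q + d))
            + (p + 0 * b + d) * ((0 * b + 1 * b + 0) / (q + d) / ((p + 0 * b + d) / (q + d)))
            + 0 - (0 + (0 * b + 1 * b))) = b * (w * ln ((p + d) / (q + d)))"
    by (simp add: algebra_simps)
qed

lemma shifted_kl_segment_deriv:
  assumes "finite S" "\<forall>v\<in>S. 0 < p v + D v" "\<forall>v\<in>S. 0 < q v + D v"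
  shows "((\<lambda>t. shifted_kl S W D (\<lambda>v. p v + t * (f v - p v)) q)
          has_real_derivative (\<Sum>v\<in>S. (f v - p v) * (W v * ln ((p v + D v) / (q v + D v)))))
         (at 0)"
  unfolding shifted_kl_def
  using assms by (intro DERIV_sum kl_term_line_deriv) auto

lemma deriv_nonneg_at_right_min:
  fixes h :: "real \<Rightarrow> real"
  assumes "(h has_real_derivative l) (at x)" "0 < e"
    and "\<And>t. 0 < t \<Longrightarrow> t \<le> e \<Longrightarrow> h x \<le> h (x + t)"
  shows "0 \<le> l"
proof (rule ccontr)
  assume "\<not> 0 \<le> l"
  then obtain d where "0 < d" and dec: "\<And>t. 0 < t \<Longrightarrow> t < d \<Longrightarrow> h (x + t) < h x"
    using DERIV_neg_dec_right[OF assms(1)] by force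
  define t where "t = min (d / 2) e"
  have "0 < t" "t < d" "t \<le> e"
    using \<open>0 < d\<close> \<open>0 < e\<close> by (auto simp: t_def)
  then show False
    using dec assms(3) by (meson not_le)
qed

lemma shifted_kl_variational_inequality:
  assumes fin: "finite S" and \<kappa>: "0 < \<kappa>"
    and W: "\<forall>v\<in>S. 0 \<le> W v" and D: "\<forall>v\<in>S. 0 < D v"
    and p: "\<forall>v\<in>S. 0 \<le> p v" "sum p S = 1"
    and f: "\<forall>v\<in>S. 0 \<le> f v" "sum f S = 1"
    and q: "\<forall>v\<in>S. 0 \<le> q v"
    and min: "\<And>x. \<forall>v\<in>S. 0 \<le> x v \<Longrightarrow> sum x S = 1 \<Longrightarrow>
      shifted_kl S W D p q / \<kappa> + (\<Sum>v\<in>S. p v * c v)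
      \<le> shifted_kl S W D x q / \<kappa> + (\<Sum>v\<in>S. x v * c v)"
  shows "(shifted_kl S W D f p - shifted_kl S W D f q) / \<kappa>
         \<le> (\<Sum>v\<in>S. f v * c v) - (\<Sum>v\<in>S. p v * c v)"
proof -
  have pos: "\<forall>v\<in>S. 0 < p v + D v" "\<forall>v\<in>S. 0 < q v + D v" "\<forall>v\<in>S. 0 < f v + D v"
    using p q f D by (auto intro: add_nonneg_pos)
  define g where "g = (\<Sum>v\<in>S. (f v - p v) * (W v * ln ((p v + D v) / (q v + D v))))"
  define seg where "seg t v = p v + t * (f v - p v)" for t v
  define h where "h t = shifted_kl S W D (seg t) q / \<kappa> + (\<Sum>v\<in>S. seg t v * c v)" for t
  have "((\<lambda>t. shifted_kl S W D (seg t) q) has_real_derivative g) (at 0)"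
    unfolding seg_def g_def using fin pos(1,2) by (rule shifted_kl_segment_deriv)
  moreover have "((\<lambda>t. \<Sum>v\<in>S. seg t v * c v)
      has_real_derivative (\<Sum>v\<in>S. (f v - p v) * c v)) (at 0)"
    unfolding seg_def by (intro DERIV_sum) (auto intro!: derivative_eq_intros)
  ultimately have "(h has_real_derivative g / \<kappa> + (\<Sum>v\<in>S. (f v - p v) * c v)) (at 0)"
    unfolding h_def by (intro DERIV_add DERIV_cdivide)
  moreover have "h 0 \<le> h (0 + t)" if "0 < t" "t \<le> 1" for t
  proof -
    have "seg t v = (1 - t) * p v + t * f v" for v
      by (simp add: seg_def algebra_simps)
    then have "\<forall>v\<in>S. 0 \<le> seg t v"
      using p f that by simp
    moreover have "sum (seg t) S = 1"
      using p f by (simp add: seg_def sum.distrib sum_subtractf flip: sum_distrib_left)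
    ultimately show ?thesis
      using min[of "seg t"] by (simp add: h_def seg_def[abs_def])
  qed
  ultimately have first_order: "0 \<le> g / \<kappa> + (\<Sum>v\<in>S. (f v - p v) * c v)"
    by (intro deriv_nonneg_at_right_min[where e = 1]) auto
  have "shifted_kl S W D f p - shifted_kl S W D f q \<le> - g"
    using shifted_kl_three_point[OF pos(3,1,2)] shifted_kl_nonneg[OF W pos(1,2)]
    by (simp add: g_def)
  then have "(shifted_kl S W D f p - shifted_kl S W D f q) / \<kappa> \<le> - g / \<kappa>"
    using \<kappa> by (intro divide_right_mono) auto
  with first_order show ?thesis
    by (simp add: sum_subtractf left_diff_distrib)
qed

lemma dagD:
  assumes "dag V A X r"
  shows "finite V" "A \<subseteq> V \<times> V" "X \<subseteq> V" "r \<in> V" "(u, r) \<notin> A"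
    and "(u, v) \<in> A \<Longrightarrow> u \<in> V - X"
    and "finite {v. (u, v) \<in> A}" "finite {u. (u, v) \<in> A}"
proof -
  show V: "finite V" and A: "A \<subseteq> V \<times> V"
    and "X \<subseteq> V" "r \<in> V" "(u, r) \<notin> A"
    using assms by (auto simp: dag_def)
  show "(u, v) \<in> A \<Longrightarrow> u \<in> V - X"
    using assms unfolding dag_def by blast
  show "finite {v. (u, v) \<in> A}" "finite {u. (u, v) \<in> A}"
    using V A by (auto intro: finite_subset)
qed

lemma sum_arcs_by_tail:
  assumes "dag V A X r"
  shows "sum g A = (\<Sum>u\<in>V - X. \<Sum>v\<in>{v. (u, v) \<in> A}. g (u, v))"
proof -
  have "A = Sigma (V - X) (\<lambda>u. {v. (u, v) \<in> A})"
    using dagD(6)[OF assms] by auto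
  then show ?thesis
    using dagD(1,7)[OF assms] by (simp add: sum.Sigma)
qed

lemma sum_arcs_by_head:
  assumes "dag V A X r"
  shows "sum g A = (\<Sum>v\<in>V. \<Sum>u\<in>{u. (u, v) \<in> A}. g (u, v))"
proof -
  have "sum g A = sum (\<lambda>(v, u). g (u, v)) (prod.swap ` A)"
    by (subst sum.reindex) (auto simp: comp_def case_prod_beta)
  also have "prod.swap ` A = Sigma V (\<lambda>v. {u. (u, v) \<in> A})"
    using dagD(2)[OF assms] by force
  finally show ?thesis
    using dagD(1,8)[OF assms] by (simp add: sum.Sigma)
qed

lemma unit_flow_source_not_sink:
  assumes "dag V A X r" "unit_flow V A X r G"
  shows "r \<notin> X"
proof
  assume "r \<in> X"
  then have "flow_val A X G r = 0"
    using dagD(5)[OF assms(1)] by (simp add: flow_val_def insum_def)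
  with assms(2) show False
    by (simp add: unit_flow_def)
qed

lemma unit_flow_telescope:
  assumes dag: "dag V A X r" and G: "unit_flow V A X r G"
  shows "(\<Sum>u\<in>V - X. (\<Sum>v\<in>{v. (u, v) \<in> A}. G (u, v) * h v) - outsum A G u * h u)
         = (\<Sum>x\<in>X. insum A G x * h x) - h r"
proof -
  have r: "r \<in> V - X" "outsum A G r = 1" "insum A G r = 0"
    using unit_flow_source_not_sink[OF assms] dagD(4,5)[OF dag] G
    by (auto simp: unit_flow_def flow_val_def insum_def)
  have conservation: "outsum A G v = insum A G v" if "v \<in> V - X" "v \<noteq> r" for v
    using G that by (auto simp: unit_flow_def is_flow_def)
  have "(\<Sum>u\<in>V - X. \<Sum>v\<in>{v. (u, v) \<in> A}. G (u, v) * h v) = (\<Sum>e\<in>A. G e * h (snd e))"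
    by (simp add: sum_arcs_by_tail[OF dag])
  also have "\<dots> = (\<Sum>v\<in>V. insum A G v * h v)"
    by (simp add: sum_arcs_by_head[OF dag] insum_def sum_distrib_right)
  also have "\<dots> = (\<Sum>v\<in>V - X. insum A G v * h v) + (\<Sum>x\<in>X. insum A G x * h x)"
    using dagD(3,1)[OF dag] by (rule sum.subset_diff)
  finally have inflow: "(\<Sum>u\<in>V - X. \<Sum>v\<in>{v. (u, v) \<in> A}. G (u, v) * h v)
      = (\<Sum>v\<in>V - X. insum A G v * h v) + (\<Sum>x\<in>X. insum A G x * h x)" .
  have "(\<Sum>v\<in>V - X. insum A G v * h v - outsum A G v * h v)
        = (\<Sum>v\<in>V - X. if v = r then - h r else 0)"
    using r conservation by (intro sum.cong) auto
  also have "\<dots> = - h r"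
    using dagD(1)[OF dag] r(1) by simp
  finally show ?thesis
    using inflow by (simp add: sum_subtractf)
qed

lemma Lambda_potential:
  assumes dag: "dag V A X r" and P: "is_Lambda V A X r p P"
    and h: "\<And>u. u \<in> V - X \<Longrightarrow> h u = (\<Sum>v\<in>{v. (u, v) \<in> A}. p (u, v) * h v)"
  shows "(\<Sum>x\<in>X. insum A P x * h x) = h r"
proof -
  have "(\<Sum>v\<in>{v. (u, v) \<in> A}. P (u, v) * h v) = outsum A P u * h u" if "u \<in> V - X" for u
    using P h[OF that] that
    by (auto simp: is_Lambda_def flow_val_def sum_distrib_left mult.assoc intro: sum.cong)
  then have "(\<Sum>u\<in>V - X. (\<Sum>v\<in>{v. (u, v) \<in> A}. P (u, v) * h v) - outsum A P u * h u) = 0"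
    by simp
  then show ?thesis
    using unit_flow_telescope[OF dag, of P h] P by (simp add: is_Lambda_def)
qed

lemma marked_theta_le_one:
  assumes dag: "dag V A X r" and mk: "marked V A X \<omega> \<theta>" and e: "(u, v) \<in> A"
  shows "\<theta> (u, v) \<le> 1"
proof -
  have "\<theta> (u, v) \<le> (\<Sum>w\<in>{w. (u, w) \<in> A}. \<theta> (u, w))"
    using mk e dagD(7)[OF dag] by (intro member_le_sum) (auto simp: marked_def less_imp_le)
  also have "\<dots> = 1"
    using mk dagD(6)[OF dag e] by (simp add: marked_def outsum_def)
  finally show ?thesis .
qed

lemma marked_eta_dlt_pos:
  assumes dag: "dag V A X r" and mk: "marked V A X \<omega> \<theta>" and e: "e \<in> A"
  shows "0 < eta \<theta> e" "0 < dlt \<theta> e"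
proof -
  have "0 < \<theta> e" "\<theta> e \<le> 1"
    using mk e marked_theta_le_one[OF dag mk, of "fst e" "snd e"] by (auto simp: marked_def)
  then show "0 < eta \<theta> e"
    by (simp add: eta_def add_pos_nonneg)
  then show "0 < dlt \<theta> e"
    using \<open>0 < \<theta> e\<close> by (simp add: dlt_def)
qed

lemma local_div_eq_shifted_kl:
  "local_div A \<omega> \<theta> \<kappa> u x y
   = shifted_kl {v. (u, v) \<in> A} (\<lambda>v. \<omega> (u, v) / eta \<theta> (u, v)) (\<lambda>v. dlt \<theta> (u, v)) x y / \<kappa>"
  by (simp add: local_div_def shifted_kl_def)

lemma kl_term_rescale:
  fixes a b d s w :: real
  assumes "b \<noteq> 0"
  shows "w * ((a + b * d) * ln ((a / b + d) / (s + d)) + b * s - a)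
         = b * (w * ((a / b + d) * ln ((a / b + d) / (s + d)) + s - a / b))"
  using assms by (simp add: field_simps)

text \<open>If outsum A F u = 0, the junk row F(u,.)/0 = 0 is harmless: it is multiplied by 0.\<close>

lemma glob_div_eq_sum_local_div:
  assumes dag: "dag V A X r"
  shows "glob_div A X \<omega> \<theta> \<kappa> F s
    = (\<Sum>u\<in>V - X. outsum A F u *
         local_div A \<omega> \<theta> \<kappa> u (\<lambda>v. F (u, v) / outsum A F u) (\<lambda>v. s (u, v)))"
proof -
  let ?T = "\<lambda>e. let Fu = flow_val A X F (fst e) in if Fu = 0 then 0 else
      \<omega> e / eta \<theta> e * ((F e + Fu * dlt \<theta> e) * ln ((F e / Fu + dlt \<theta> e) / (s e + dlt \<theta> e))
        + Fu * s e - F e)"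
  have "(\<Sum>v\<in>{v. (u, v) \<in> A}. ?T (u, v))
        = outsum A F u * shifted_kl {v. (u, v) \<in> A} (\<lambda>v. \<omega> (u, v) / eta \<theta> (u, v))
            (\<lambda>v. dlt \<theta> (u, v)) (\<lambda>v. F (u, v) / outsum A F u) (\<lambda>v. s (u, v))"
    if "u \<in> V - X" for u
  proof (cases "outsum A F u = 0")
    case False
    then show ?thesis
      using that unfolding shifted_kl_def sum_distrib_left
      by (intro sum.cong) (simp_all add: flow_val_def kl_term_rescale Let_def)
  qed (use that in \<open>simp add: flow_val_def\<close>)
  then show ?thesis
    unfolding glob_div_def sum_arcs_by_tail[OF dag] local_div_eq_shifted_kl
    by (simp add: sum_distrib_left)
qed

definition is_step_minimiser ::
    "('v \<times> 'v) set \<Rightarrow> ('v \<times> 'v \<Rightarrow> real) \<Rightarrow> ('v \<times> 'v \<Rightarrow> real) \<Rightarrow> real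
     \<Rightarrow> ('v \<times> 'v \<Rightarrow> real) \<Rightarrow> ('v \<Rightarrow> real) \<Rightarrow> 'v \<Rightarrow> ('v \<Rightarrow> real) \<Rightarrow> bool" where
  "is_step_minimiser A \<omega> \<theta> \<kappa> q h u x \<longleftrightarrow> x \<in> simplex_at A u \<and>
     (\<forall>x' \<in> simplex_at A u.
        local_div A \<omega> \<theta> \<kappa> u x (\<lambda>v. q (u, v)) + (\<Sum>v\<in>{v. (u, v) \<in> A}. x v * h v)
        \<le> local_div A \<omega> \<theta> \<kappa> u x' (\<lambda>v. q (u, v)) + (\<Sum>v\<in>{v. (u, v) \<in> A}. x' v * h v))"

lemma step_minimiser_variational_inequality:
  assumes dag: "dag V A X r" and mk: "marked V A X \<omega> \<theta>" and \<kappa>: "0 < \<kappa>"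
    and q: "in_Q V A X q" and u: "u \<in> V - X"
    and min: "is_step_minimiser A \<omega> \<theta> \<kappa> q h u (\<lambda>v. p (u, v))"
    and f: "f \<in> simplex_at A u"
  shows "local_div A \<omega> \<theta> \<kappa> u f (\<lambda>v. p (u, v)) - local_div A \<omega> \<theta> \<kappa> u f (\<lambda>v. q (u, v))
         \<le> (\<Sum>v\<in>{v. (u, v) \<in> A}. f v * h v) - (\<Sum>v\<in>{v. (u, v) \<in> A}. p (u, v) * h v)"
  unfolding local_div_eq_shifted_kl diff_divide_distrib[symmetric]
proof (rule shifted_kl_variational_inequality[OF dagD(7)[OF dag] \<kappa>])
  show "\<forall>v\<in>{v. (u, v) \<in> A}. 0 \<le> \<omega> (u, v) / eta \<theta> (u, v)"
    and "\<forall>v\<in>{v. (u, v) \<in> A}. 0 < dlt \<theta> (u, v)"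
    using mk marked_eta_dlt_pos[OF dag mk] by (auto simp: marked_def less_imp_le)
  show "\<forall>v\<in>{v. (u, v) \<in> A}. 0 \<le> p (u, v)" "(\<Sum>v\<in>{v. (u, v) \<in> A}. p (u, v)) = 1"
    using min by (auto simp: is_step_minimiser_def simplex_at_def)
  show "\<forall>v\<in>{v. (u, v) \<in> A}. 0 \<le> f v" "sum f {v. (u, v) \<in> A} = 1"
    using f by (auto simp: simplex_at_def)
  show "\<forall>v\<in>{v. (u, v) \<in> A}. 0 \<le> q (u, v)"
    using q by (simp add: in_Q_def)
  fix x :: "'a \<Rightarrow> real"
  assume "\<forall>v\<in>{v. (u, v) \<in> A}. 0 \<le> x v" "sum x {v. (u, v) \<in> A} = 1"
  then have "x \<in> simplex_at A u"
    by (simp add: simplex_at_def)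
  with min show "shifted_kl {v. (u, v) \<in> A} (\<lambda>v. \<omega> (u, v) / eta \<theta> (u, v)) (\<lambda>v. dlt \<theta> (u, v))
                   (\<lambda>v. p (u, v)) (\<lambda>v. q (u, v)) / \<kappa> + (\<Sum>v\<in>{v. (u, v) \<in> A}. p (u, v) * h v)
                 \<le> shifted_kl {v. (u, v) \<in> A} (\<lambda>v. \<omega> (u, v) / eta \<theta> (u, v)) (\<lambda>v. dlt \<theta> (u, v))
                   x (\<lambda>v. q (u, v)) / \<kappa> + (\<Sum>v\<in>{v. (u, v) \<in> A}. x v * h v)"
    by (simp add: is_step_minimiser_def local_div_eq_shifted_kl)
qed

lemma step_minimiser_bound:
  assumes dag: "dag V A X r" and mk: "marked V A X \<omega> \<theta>" and \<kappa>: "0 < \<kappa>"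
    and q: "in_Q V A X q" and F: "\<forall>e\<in>A. 0 \<le> F e" and u: "u \<in> V - X"
    and min: "is_step_minimiser A \<omega> \<theta> \<kappa> q h u (\<lambda>v. p (u, v))"
  shows "outsum A F u * (local_div A \<omega> \<theta> \<kappa> u (\<lambda>v. F (u, v) / outsum A F u) (\<lambda>v. p (u, v))
                         - local_div A \<omega> \<theta> \<kappa> u (\<lambda>v. F (u, v) / outsum A F u) (\<lambda>v. q (u, v)))
         \<le> (\<Sum>v\<in>{v. (u, v) \<in> A}. F (u, v) * h v)
           - outsum A F u * (\<Sum>v\<in>{v. (u, v) \<in> A}. p (u, v) * h v)"
proof -
  define S where "S = {v. (u, v) \<in> A}"
  define Fu where "Fu = outsum A F u"
  have Fu_sum: "Fu = (\<Sum>v\<in>S. F (u, v))"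
    by (simp add: Fu_def S_def outsum_def)
  have F_row: "\<forall>v\<in>S. 0 \<le> F (u, v)"
    using F by (simp add: S_def)
  show ?thesis
  proof (cases "Fu = 0")
    case True
    then have "\<forall>v\<in>S. F (u, v) = 0"
      using Fu_sum F_row sum_nonneg_eq_0_iff[OF dagD(7)[OF dag], of u "\<lambda>v. F (u, v)"]
      by (simp add: S_def)
    then show ?thesis
      using True by (simp add: Fu_def S_def)
  next
    case False
    then have "0 < Fu"
      using Fu_sum F_row sum_nonneg[of S "\<lambda>v. F (u, v)"] by force
    then have "(\<lambda>v. F (u, v) / Fu) \<in> simplex_at A u"
      using F_row Fu_sum by (simp add: simplex_at_def S_def flip: sum_divide_distrib)
    from step_minimiser_variational_inequality[OF dag mk \<kappa> q u min this]
    have "Fu * (local_div A \<omega> \<theta> \<kappa> u (\<lambda>v. F (u, v) / Fu) (\<lambda>v. p (u, v))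
                - local_div A \<omega> \<theta> \<kappa> u (\<lambda>v. F (u, v) / Fu) (\<lambda>v. q (u, v)))
          \<le> Fu * ((\<Sum>v\<in>S. F (u, v) / Fu * h v) - (\<Sum>v\<in>S. p (u, v) * h v))"
      using \<open>0 < Fu\<close> by (simp add: S_def)
    also have "\<dots> = (\<Sum>v\<in>S. F (u, v) * h v) - Fu * (\<Sum>v\<in>S. p (u, v) * h v)"
      using \<open>0 < Fu\<close> by (simp add: right_diff_distrib sum_distrib_left)
    finally show ?thesis
      by (simp add: Fu_def S_def)
  qed
qed

theorem lemma4p6:
  fixes V :: "'v set" and A :: "('v \<times> 'v) set" and X :: "'v set" and r :: 'v
    and \<omega> \<theta> :: "'v \<times> 'v \<Rightarrow> real" and \<kappa> :: real
    and q p P F :: "'v \<times> 'v \<Rightarrow> real" and c :: "'v \<Rightarrow> real"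
  assumes "dag V A X r"
    and "marked V A X \<omega> \<theta>"
    and "\<kappa> > 0"
    and "in_Q V A X q"
    and "\<forall>x\<in>X. 0 \<le> c x"
    and "step_output V A X \<omega> \<theta> \<kappa> q c p"
    and "is_Lambda V A X r p P"
    and "unit_flow V A X r F"
  shows "glob_div A X \<omega> \<theta> \<kappa> F p - glob_div A X \<omega> \<theta> \<kappa> F q
           \<le> (\<Sum>x\<in>X. c x * (flow_val A X F x - flow_val A X P x))"
proof -
  obtain h where h_X: "\<forall>x\<in>X. h x = c x"
    and h_tail: "\<And>u. u \<in> V - X \<Longrightarrow> h u = (\<Sum>v\<in>{v. (u, v) \<in> A}. p (u, v) * h v)"
    and h_min: "\<And>u. u \<in> V - X \<Longrightarrow> is_step_minimiser A \<omega> \<theta> \<kappa> q h u (\<lambda>v. p (u, v))"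
    using assms(6) unfolding step_output_def is_step_minimiser_def by blast
  have F_nonneg: "\<forall>e\<in>A. 0 \<le> F e"
    using assms(8) by (simp add: unit_flow_def is_flow_def)
  have "glob_div A X \<omega> \<theta> \<kappa> F p - glob_div A X \<omega> \<theta> \<kappa> F q
      = (\<Sum>u\<in>V - X. outsum A F u *
           (local_div A \<omega> \<theta> \<kappa> u (\<lambda>v. F (u, v) / outsum A F u) (\<lambda>v. p (u, v))
            - local_div A \<omega> \<theta> \<kappa> u (\<lambda>v. F (u, v) / outsum A F u) (\<lambda>v. q (u, v))))"
    by (simp add: glob_div_eq_sum_local_div[OF assms(1)] right_diff_distrib sum_subtractf)
  also have "\<dots> \<le> (\<Sum>u\<in>V - X. (\<Sum>v\<in>{v. (u, v) \<in> A}. F (u, v) * h v) - outsum A F u * h u)"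
    using step_minimiser_bound[OF assms(1-4) F_nonneg _ h_min] h_tail by (intro sum_mono) simp
  also have "\<dots> = (\<Sum>x\<in>X. insum A F x * h x) - (\<Sum>x\<in>X. insum A P x * h x)"
    using unit_flow_telescope[OF assms(1,8)] Lambda_potential[OF assms(1,7) h_tail] by simp
  finally show ?thesis
    using h_X by (simp add: flow_val_def algebra_simps sum_subtractf)
qed

end
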